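(* Let $V$ be a finite set, let $\mathbb{F}$ be a field, let $A$ be a $V\times V$-matrix over $\mathbb{F}$, and let $Z\subseteq V$ be such that $A[Z,Z]$ is nonsingular. Then $p(A) = p(A*Z)$, where for a $V\times V$-matrix $B$ the nullity polynomial is $p(B) = \sum_{X,Y\subseteq V} y^{\,n(B[X,Y])}$ (a polynomial in the indeterminate $y$).
   Context: A $V\times V$-matrix over $\mathbb{F}$ is a function $V\times V\to\mathbb{F}$. For $X,Y\subseteq V$, $B[X,Y]$ denotes the restriction of $B$ to $X\times Y$, viewed as a linear map $\mathbb{F}^Y\to\mathbb{F}^X$, and $n(\cdot)$ denotes its nullity (dimension of its null space in $\mathbb{F}^Y$); the sum ranges over all pairs of subsets, including empty ones. For $Z\subseteq V$ with $A[Z,Z]$ nonsingular, the principal pivot transform $A*Z$ is the $V\times V$-matrix given blockwise (with $\bar Z=V\setminus Z$) by $(A*Z)[Z,Z]=A[Z,Z]^{-1}$, $(A*Z)[Z,\bar Z]=-A[Z,Z]^{-1}A[Z,\bar Z]$, $(A*Z)[\bar Z,Z]=A[\bar Z,Z]A[Z,Z]^{-1}$, $(A*Z)[\bar Z,\bar Z]=A[\bar Z,\bar Z]-A[\bar Z,Z]A[Z,Z]^{-1}A[Z,\bar Z]$. *)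

theory Defs
  imports Main "HOL-Library.Function_Algebras" "HOL-Computational_Algebra.Polynomial"
begin

text \<open>A V x V matrix over a field is represented as a function of two arguments
  'v => 'v => 'a; only its values on V x V matter.
  Vectors in F^Y are functions 'v => 'a vanishing outside Y.\<close>

definition fscale :: "'a::field \<Rightarrow> ('v \<Rightarrow> 'a) \<Rightarrow> ('v \<Rightarrow> 'a)" where
  "fscale c f = (\<lambda>x. c * f x)"

lemma vector_space_fscale: "vector_space (fscale :: 'a::field \<Rightarrow> ('v \<Rightarrow> 'a) \<Rightarrow> _)"
  by unfold_locales (auto simp: fscale_def algebra_simps)

definition null_space :: "('v \<Rightarrow> 'v \<Rightarrow> 'a::field) \<Rightarrow> 'v set \<Rightarrow> 'v set \<Rightarrow> ('v \<Rightarrow> 'a) set" where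
  "null_space B X Y = {x. (\<forall>j. j \<notin> Y \<longrightarrow> x j = 0) \<and> (\<forall>i\<in>X. (\<Sum>j\<in>Y. B i j * x j) = 0)}"

definition nullity :: "('v \<Rightarrow> 'v \<Rightarrow> 'a::field) \<Rightarrow> 'v set \<Rightarrow> 'v set \<Rightarrow> nat" where
  "nullity B X Y = vector_space.dim fscale (null_space B X Y)"

definition nullity_poly :: "'v set \<Rightarrow> ('v \<Rightarrow> 'v \<Rightarrow> 'a::field) \<Rightarrow> nat poly" where
  "nullity_poly V B = (\<Sum>X\<in>Pow V. \<Sum>Y\<in>Pow V. monom 1 (nullity B X Y))"

definition is_inverse_on :: "'v set \<Rightarrow> ('v \<Rightarrow> 'v \<Rightarrow> 'a::field) \<Rightarrow> ('v \<Rightarrow> 'v \<Rightarrow> 'a) \<Rightarrow> bool" where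
  "is_inverse_on Z A B \<longleftrightarrow>
     (\<forall>i\<in>Z. \<forall>k\<in>Z. (\<Sum>j\<in>Z. A i j * B j k) = (if i = k then 1 else 0)) \<and>
     (\<forall>i\<in>Z. \<forall>k\<in>Z. (\<Sum>j\<in>Z. B i j * A j k) = (if i = k then 1 else 0))"

definition nonsingular_on :: "'v set \<Rightarrow> ('v \<Rightarrow> 'v \<Rightarrow> 'a::field) \<Rightarrow> bool" where
  "nonsingular_on Z A \<longleftrightarrow> (\<exists>B. is_inverse_on Z A B)"

definition inverse_on :: "'v set \<Rightarrow> ('v \<Rightarrow> 'v \<Rightarrow> 'a::field) \<Rightarrow> ('v \<Rightarrow> 'v \<Rightarrow> 'a)" where
  "inverse_on Z A = (SOME B. is_inverse_on Z A B)"

text \<open>Principal pivot transform A*Z (entries outside V x V are set to 0).\<close>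
definition ppt :: "'v set \<Rightarrow> ('v \<Rightarrow> 'v \<Rightarrow> 'a::field) \<Rightarrow> 'v set \<Rightarrow> ('v \<Rightarrow> 'v \<Rightarrow> 'a)" where
  "ppt V A Z = (let Ai = inverse_on Z A; Zb = V - Z in (\<lambda>i j.
     if i \<in> Z \<and> j \<in> Z then Ai i j
     else if i \<in> Z \<and> j \<in> Zb then - (\<Sum>k\<in>Z. Ai i k * A k j)
     else if i \<in> Zb \<and> j \<in> Z then (\<Sum>k\<in>Z. A i k * Ai k j)
     else if i \<in> Zb \<and> j \<in> Zb then A i j - (\<Sum>k\<in>Z. \<Sum>l\<in>Z. A i k * Ai k l * A l j)
     else 0))"

end

theory Submission
  imports Defs
begin

text \<open>Write \<open>x' = pivot_vec V A Z x\<close> for the vector obtained from \<open>x\<close> by replacing its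
  \<open>Z\<close>-entries with those of \<open>A x\<close>. The defining formulas of the pivot transform say exactly
  that \<open>(A*Z) x'\<close> is \<open>A x\<close> with its \<open>Z\<close>-entries replaced by those of \<open>x\<close>: the graph of
  \<open>A*Z\<close> arises from the graph of \<open>A\<close> by exchanging input and output coordinates on \<open>Z\<close>.
  This linear bijection therefore maps the null space of \<open>A[X,Y]\<close> onto that of
  \<open>(A*Z)[(X - Z) \<union> (Z - Y), (Y - Z) \<union> (Z - X)]\<close>, and the index map
  \<open>(X, Y) \<mapsto> ((X - Z) \<union> (Z - Y), (Y - Z) \<union> (Z - X))\<close> is an involution of
  \<open>Pow V \<times> Pow V\<close>, so the two sums defining the nullity polynomials agree term by term.\<close>

lemma (in vector_space_pair) dim_image_eq_inj_on:
  assumes lf: "Vector_Spaces.linear s1 s2 f" and inj: "inj_on f (vs1.span S)"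
  shows "vs2.dim (f ` S) = vs1.dim S"
proof -
  obtain B where B: "B \<subseteq> S" "vs1.independent B" "S \<subseteq> vs1.span B" "card B = vs1.dim S"
    using vs1.basis_exists[of S] by blast
  have span_B: "vs1.span B = vs1.span S"
    using B(1,3) by (metis vs1.span_eq vs1.span_mono vs1.span_span vs1.span_superset)
  have "vs2.dim (f ` S) = vs2.dim (f ` B)"
    using span_B by (metis lf linear_span_image vs2.dim_span)
  also have "\<dots> = card (f ` B)"
    using inj span_B B(2) by (metis lf linear_dependent_inj_imageD vs2.dim_eq_card_independent)
  also have "\<dots> = card B"
    using inj span_B by (metis card_image inj_on_subset vs1.span_superset)
  finally show ?thesis using B(4) by simp
qed

lemma sum_mult_sum_right_inverse:
  fixes M N :: "'v \<Rightarrow> 'v \<Rightarrow> 'a::comm_ring_1"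
  assumes "finite Z" "i \<in> Z" and MN: "\<And>l. l \<in> Z \<Longrightarrow> (\<Sum>j\<in>Z. M i j * N j l) = (if i = l then 1 else 0)"
  shows "(\<Sum>j\<in>Z. M i j * (\<Sum>l\<in>Z. N j l * u l)) = u i"
proof -
  have "(\<Sum>j\<in>Z. M i j * (\<Sum>l\<in>Z. N j l * u l)) = (\<Sum>l\<in>Z. (\<Sum>j\<in>Z. M i j * N j l) * u l)"
    by (simp add: sum_distrib_left sum_distrib_right mult.assoc) (rule sum.swap)
  also have "\<dots> = (\<Sum>l\<in>Z. if i = l then u l else 0)"
    by (rule sum.cong) (simp_all add: MN)
  finally show ?thesis using assms(1,2) by simp
qed

definition mat_vec :: "'v set \<Rightarrow> ('v \<Rightarrow> 'v \<Rightarrow> 'a::field) \<Rightarrow> ('v \<Rightarrow> 'a) \<Rightarrow> 'v \<Rightarrow> 'a" where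
  "mat_vec V B x i = (\<Sum>j\<in>V. B i j * x j)"

lemma mat_vec_split:
  "finite V \<Longrightarrow> Z \<subseteq> V \<Longrightarrow> mat_vec V B x i = (\<Sum>j\<in>Z. B i j * x j) + (\<Sum>j\<in>V - Z. B i j * x j)"
  unfolding mat_vec_def by (simp add: sum.subset_diff)

lemma null_space_iff_mat_vec:
  assumes "finite V" "Y \<subseteq> V"
  shows "x \<in> null_space B X Y \<longleftrightarrow> (\<forall>j. j \<notin> Y \<longrightarrow> x j = 0) \<and> (\<forall>i\<in>X. mat_vec V B x i = 0)"
proof -
  have "(\<Sum>j\<in>Y. B i j * x j) = mat_vec V B x i" if "\<forall>j. j \<notin> Y \<longrightarrow> x j = 0" for i
    unfolding mat_vec_def by (rule sum.mono_neutral_left) (use assms that in auto)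
  then show ?thesis unfolding null_space_def by auto
qed

definition pivot_vec :: "'v set \<Rightarrow> ('v \<Rightarrow> 'v \<Rightarrow> 'a::field) \<Rightarrow> 'v set \<Rightarrow> ('v \<Rightarrow> 'a) \<Rightarrow> 'v \<Rightarrow> 'a" where
  "pivot_vec V A Z x = override_on x (mat_vec V A x) Z"

lemma linear_pivot_vec: "Vector_Spaces.linear fscale fscale (pivot_vec V A Z)"
proof -
  interpret vector_space "fscale :: 'a \<Rightarrow> ('v \<Rightarrow> 'a) \<Rightarrow> _" by (rule vector_space_fscale)
  show ?thesis
    by unfold_locales
      (auto simp: pivot_vec_def override_on_def mat_vec_def fscale_def fun_eq_iff
        sum.distrib sum_distrib_left algebra_simps)
qed

lemma ppt_entries:
  "i \<in> Z \<Longrightarrow> j \<in> Z \<Longrightarrow> ppt V A Z i j = inverse_on Z A i j"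
  "i \<in> Z \<Longrightarrow> j \<in> V - Z \<Longrightarrow> ppt V A Z i j = - (\<Sum>k\<in>Z. inverse_on Z A i k * A k j)"
  "i \<in> V - Z \<Longrightarrow> j \<in> Z \<Longrightarrow> ppt V A Z i j = (\<Sum>k\<in>Z. A i k * inverse_on Z A k j)"
  "i \<in> V - Z \<Longrightarrow> j \<in> V - Z \<Longrightarrow>
     ppt V A Z i j = A i j - (\<Sum>k\<in>Z. \<Sum>l\<in>Z. A i k * inverse_on Z A k l * A l j)"
  by (simp_all add: ppt_def Let_def)

lemma is_inverse_on_inverse_on: "nonsingular_on Z A \<Longrightarrow> is_inverse_on Z A (inverse_on Z A)"
  unfolding nonsingular_on_def inverse_on_def by (erule someI_ex)

context
  fixes V Z :: "'v set" and A :: "'v \<Rightarrow> 'v \<Rightarrow> 'a::field"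
  assumes finV: "finite V" and ZV: "Z \<subseteq> V" and nonsing: "nonsingular_on Z A"
begin

private lemma finZ: "finite Z"
  using finV ZV by (rule finite_subset[rotated])

private lemma inverse_left:
    "i \<in> Z \<Longrightarrow> k \<in> Z \<Longrightarrow> (\<Sum>j\<in>Z. inverse_on Z A i j * A j k) = (if i = k then 1 else 0)"
  and inverse_right:
    "i \<in> Z \<Longrightarrow> k \<in> Z \<Longrightarrow> (\<Sum>j\<in>Z. A i j * inverse_on Z A j k) = (if i = k then 1 else 0)"
  using is_inverse_on_inverse_on[OF nonsing] unfolding is_inverse_on_def by blast+

lemma inverse_on_mult_mat_vec:
  assumes "i \<in> Z"
  shows "(\<Sum>j\<in>Z. inverse_on Z A i j * mat_vec V A x j)
    = x i + (\<Sum>l\<in>V - Z. (\<Sum>k\<in>Z. inverse_on Z A i k * A k l) * x l)"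
proof -
  have "(\<Sum>j\<in>Z. inverse_on Z A i j * (\<Sum>l\<in>Z. A j l * x l)) = x i"
    using finZ assms by (rule sum_mult_sum_right_inverse) (simp add: inverse_left assms)
  moreover have "(\<Sum>j\<in>Z. inverse_on Z A i j * (\<Sum>l\<in>V - Z. A j l * x l))
      = (\<Sum>l\<in>V - Z. (\<Sum>k\<in>Z. inverse_on Z A i k * A k l) * x l)"
    by (simp add: sum_distrib_left sum_distrib_right mult.assoc) (rule sum.swap)
  ultimately show ?thesis
    by (simp add: mat_vec_split[OF finV ZV] distrib_left sum.distrib)
qed

lemma mat_vec_ppt_pivot_vec:
  assumes "i \<in> V"
  shows "mat_vec V (ppt V A Z) (pivot_vec V A Z x) i = override_on (mat_vec V A x) x Z i"
proof (cases "i \<in> Z")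
  case True
  have "mat_vec V (ppt V A Z) (pivot_vec V A Z x) i
      = (\<Sum>j\<in>Z. inverse_on Z A i j * mat_vec V A x j)
        - (\<Sum>l\<in>V - Z. (\<Sum>k\<in>Z. inverse_on Z A i k * A k l) * x l)"
    unfolding mat_vec_split[OF finV ZV, of "ppt V A Z"]
    using True by (simp add: pivot_vec_def override_on_def ppt_entries sum_negf)
  then show ?thesis
    using True by (simp add: inverse_on_mult_mat_vec override_on_def)
next
  case False
  let ?y = "mat_vec V A x"
  have "(\<Sum>j\<in>Z. (\<Sum>k\<in>Z. A i k * inverse_on Z A k j) * ?y j)
      = (\<Sum>k\<in>Z. A i k * (\<Sum>j\<in>Z. inverse_on Z A k j * ?y j))"
    by (simp add: sum_distrib_left sum_distrib_right mult.assoc) (rule sum.swap)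
  txt \<open>The second summand cancels the Schur complement part of \<open>(A*Z)[V - Z, V - Z]\<close>.\<close>
  also have "\<dots> = (\<Sum>k\<in>Z. A i k * x k)
      + (\<Sum>l\<in>V - Z. (\<Sum>k\<in>Z. \<Sum>m\<in>Z. A i k * inverse_on Z A k m * A m l) * x l)"
  proof -
    have "(\<Sum>k\<in>Z. A i k * (\<Sum>l\<in>V - Z. (\<Sum>m\<in>Z. inverse_on Z A k m * A m l) * x l))
        = (\<Sum>l\<in>V - Z. (\<Sum>k\<in>Z. \<Sum>m\<in>Z. A i k * inverse_on Z A k m * A m l) * x l)"
      by (simp add: sum_distrib_left sum_distrib_right mult.assoc) (rule sum.swap)
    then show ?thesis
      by (simp add: inverse_on_mult_mat_vec distrib_left sum.distrib)
  qed
  finally show ?thesis using assms False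
    unfolding mat_vec_split[OF finV ZV, of "ppt V A Z"]
    by (simp add: pivot_vec_def override_on_def ppt_entries mat_vec_split[OF finV ZV]
        left_diff_distrib sum_subtractf)
qed

lemma pivot_vec_ppt_pivot_vec: "pivot_vec V (ppt V A Z) Z (pivot_vec V A Z x) = x"
proof
  fix i
  show "pivot_vec V (ppt V A Z) Z (pivot_vec V A Z x) i = x i"
  proof (cases "i \<in> Z")
    case True
    then show ?thesis
      using mat_vec_ppt_pivot_vec[of i x] ZV by (auto simp: pivot_vec_def[of V "ppt V A Z"])
  next
    case False
    then show ?thesis by (simp add: pivot_vec_def)
  qed
qed

lemma mat_vec_pivot_vec_ppt:
  assumes "i \<in> Z"
  shows "mat_vec V A (pivot_vec V (ppt V A Z) Z x) i = x i"
proof -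
  have "(\<Sum>j\<in>Z. A i j * (\<Sum>l\<in>Z. inverse_on Z A j l * x l)) = x i"
    using finZ assms by (rule sum_mult_sum_right_inverse) (simp add: inverse_right assms)
  moreover have "(\<Sum>j\<in>Z. A i j * (\<Sum>l\<in>V - Z. - (\<Sum>k\<in>Z. inverse_on Z A j k * A k l) * x l))
      = - (\<Sum>l\<in>V - Z. (\<Sum>j\<in>Z. A i j * (\<Sum>k\<in>Z. inverse_on Z A j k * A k l)) * x l)"
    by (simp add: sum_distrib_left sum_distrib_right mult.assoc sum_negf) (rule sum.swap)
  moreover have "(\<Sum>j\<in>Z. A i j * (\<Sum>k\<in>Z. inverse_on Z A j k * A k l)) = A i l" for l
    using finZ assms by (rule sum_mult_sum_right_inverse) (simp add: inverse_right assms)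
  ultimately show ?thesis
    unfolding mat_vec_split[OF finV ZV, of A] pivot_vec_def override_on_def
      mat_vec_split[OF finV ZV, of "ppt V A Z"]
    by (simp add: ppt_entries distrib_left sum.distrib)
qed

lemma pivot_vec_pivot_vec_ppt: "pivot_vec V A Z (pivot_vec V (ppt V A Z) Z x) = x"
proof
  fix i
  show "pivot_vec V A Z (pivot_vec V (ppt V A Z) Z x) i = x i"
  proof (cases "i \<in> Z")
    case True
    then show ?thesis by (simp add: pivot_vec_def[of V A] mat_vec_pivot_vec_ppt)
  next
    case False
    then show ?thesis by (simp add: pivot_vec_def)
  qed
qed

lemma pivot_vec_in_null_space_ppt_iff:
  assumes "X \<subseteq> V" "Y \<subseteq> V"
  shows "pivot_vec V A Z x \<in> null_space (ppt V A Z) ((X - Z) \<union> (Z - Y)) ((Y - Z) \<union> (Z - X))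
    \<longleftrightarrow> x \<in> null_space A X Y"
proof -
  let ?y = "mat_vec V A x"
  have pivot: "pivot_vec V A Z x j = (if j \<in> Z then ?y j else x j)" for j
    by (simp add: pivot_vec_def)
  have P_pivot: "mat_vec V (ppt V A Z) (pivot_vec V A Z x) i = (if i \<in> Z then x i else ?y i)"
    if "i \<in> (X - Z) \<union> (Z - Y)" for i
  proof -
    have "i \<in> V" using that assms ZV by blast
    then show ?thesis by (simp add: mat_vec_ppt_pivot_vec override_on_def)
  qed
  have Y'V: "(Y - Z) \<union> (Z - X) \<subseteq> V"
    using assms ZV by blast
  show ?thesis
    unfolding null_space_iff_mat_vec[OF finV assms(2)] null_space_iff_mat_vec[OF finV Y'V]
    using P_pivot by (auto simp: pivot)
qed

lemma pivot_vec_image_null_space: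
  assumes "X \<subseteq> V" "Y \<subseteq> V"
  shows "pivot_vec V A Z ` null_space A X Y
    = null_space (ppt V A Z) ((X - Z) \<union> (Z - Y)) ((Y - Z) \<union> (Z - X))" (is "_ = ?N")
proof
  show "pivot_vec V A Z ` null_space A X Y \<subseteq> ?N"
    using pivot_vec_in_null_space_ppt_iff[OF assms] by blast
next
  show "?N \<subseteq> pivot_vec V A Z ` null_space A X Y"
  proof
    fix x assume "x \<in> ?N"
    then have "pivot_vec V (ppt V A Z) Z x \<in> null_space A X Y"
      by (simp add: pivot_vec_in_null_space_ppt_iff[OF assms, symmetric] pivot_vec_pivot_vec_ppt)
    then show "x \<in> pivot_vec V A Z ` null_space A X Y"
      by (rule rev_image_eqI) (simp add: pivot_vec_pivot_vec_ppt)
  qed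
qed

lemma nullity_ppt:
  assumes "X \<subseteq> V" "Y \<subseteq> V"
  shows "nullity (ppt V A Z) ((X - Z) \<union> (Z - Y)) ((Y - Z) \<union> (Z - X)) = nullity A X Y"
proof -
  interpret vector_space_pair fscale "fscale :: 'a \<Rightarrow> ('v \<Rightarrow> 'a) \<Rightarrow> _"
    by (simp add: vector_space_pair_def vector_space_fscale)
  have inj: "inj (pivot_vec V A Z)"
    by (rule inj_on_inverseI[where g = "pivot_vec V (ppt V A Z) Z"]) (rule pivot_vec_ppt_pivot_vec)
  show ?thesis
    unfolding nullity_def pivot_vec_image_null_space[OF assms, symmetric]
    by (rule dim_image_eq_inj_on[OF linear_pivot_vec inj_on_subset[OF inj subset_UNIV]])
qed

end

theorem corollary2:
  fixes V Z :: "'v set" and A :: "'v \<Rightarrow> 'v \<Rightarrow> 'a::field"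
  assumes "finite V" and "Z \<subseteq> V" and "nonsingular_on Z A"
  shows "nullity_poly V A = nullity_poly V (ppt V A Z)"
proof -
  define \<sigma> :: "'v set \<times> 'v set \<Rightarrow> 'v set \<times> 'v set"
    where "\<sigma> = (\<lambda>(X, Y). ((X - Z) \<union> (Z - Y), (Y - Z) \<union> (Z - X)))"
  have involution: "\<sigma> (\<sigma> p) = p" for p
    by (auto simp: \<sigma>_def split: prod.splits)
  have "\<sigma> p \<in> Pow V \<times> Pow V" if "p \<in> Pow V \<times> Pow V" for p
    using that assms(2) by (auto simp: \<sigma>_def)
  moreover have "nullity (ppt V A Z) (fst (\<sigma> p)) (snd (\<sigma> p)) = nullity A (fst p) (snd p)"
    if "p \<in> Pow V \<times> Pow V" for p
    using that nullity_ppt[OF assms] by (auto simp: \<sigma>_def)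
  ultimately show ?thesis
    unfolding nullity_poly_def sum.cartesian_product
    by (intro sum.reindex_bij_witness[where i = \<sigma> and j = \<sigma>]) (auto simp: involution case_prod_beta)
qed

end
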